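(* Let $G$ be a simple graph with $m$ edges and $W$ wedges, and let $\mathcal{S}$ be a fixed nonempty subset of the wedges of $G$. Let $\mathcal{R}=(r_1,\dots,r_s)$ be $s\ge 2$ independent uniformly random edges of $G$, and let $X$ be the number of index pairs $i<j$ such that $\{r_i,r_j\}\in\mathcal{S}$. (1) $\mathbf{E}[X] = \binom{s}{2}\cdot \frac{2|\mathcal{S}|}{m^2}$. (2) There is an absolute constant $c'$ such that for every $\gamma\in(0,1)$: if $W\ge m$ and $s \ge c' m/(\gamma^3\sqrt{W})$, then with probability at least $1-\gamma$, $|X-\mathbf{E}[X]| \le (\gamma W/|\mathcal{S}|)\,\mathbf{E}[X]$.
   Context: A wedge is a path of length 2 in $G$, i.e. an unordered pair of distinct edges sharing exactly one vertex; $W$ denotes the total number of wedges of $G$. *)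

theory Defs
  imports "HOL-Probability.Probability"
begin

definition simple_graph :: "'a set set \<Rightarrow> bool" where
  "simple_graph E \<longleftrightarrow> finite E \<and> (\<forall>e\<in>E. card e = 2)"

definition wedges :: "'a set set \<Rightarrow> 'a set set set" where
  "wedges E = {{e, f} | e f. e \<in> E \<and> f \<in> E \<and> e \<noteq> f \<and> card (e \<inter> f) = 1}"

definition random_edges :: "'a set set \<Rightarrow> nat \<Rightarrow> (nat \<Rightarrow> 'a set) pmf" where
  "random_edges E s = Pi_pmf {..<s} undefined (\<lambda>_. pmf_of_set E)"

definition pair_count :: "'a set set set \<Rightarrow> nat \<Rightarrow> (nat \<Rightarrow> 'a set) \<Rightarrow> nat" where
  "pair_count S s r = card {(i, j). i < j \<and> j < s \<and> {r i, r j} \<in> S}"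

end

theory Submission
  imports Defs
begin

text \<open>
  Write \<open>X\<close> as the sum of the indicators \<open>Y\<^sub>i\<^sub>j\<close> of the events \<open>{r\<^sub>i, r\<^sub>j} \<in> S\<close>. Each has
  expectation \<open>p = 2|S|/m\<^sup>2\<close>, which gives the expectation. For the variance, indicators of
  disjoint index pairs are independent; for two pairs sharing one index the joint probability
  is at most \<open>p\<close> times the largest number of wedge partners of an edge, divided by \<open>m\<close>. An edge
  has at most \<open>4\<surd>W\<close> wedge partners, since the \<open>k\<close> edges at a vertex already form \<open>k(k-1)/2\<close>
  wedges. Hence \<open>Var X \<le> \<mu> (1 + 16 s \<surd>W / m)\<close> with \<open>\<mu> = E[X]\<close>. Since \<open>|S| \<le> W\<close>, the
  deviation \<open>\<delta> = \<gamma> W \<mu> / |S|\<close> satisfies \<open>\<delta>\<^sup>2 \<ge> \<gamma>\<^sup>2 W \<mu>\<^sup>2 / |S| \<ge> \<gamma>\<^sup>2 \<mu> (s \<surd>W / m)\<^sup>2 / 2\<close>,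
  so Chebyshev's inequality gives probability at least \<open>1 - \<gamma>\<close> once \<open>s \<ge> 100 m / (\<gamma>\<^sup>3 \<surd>W)\<close>.
\<close>

section \<open>Independent uniform samples\<close>

lemma measure_Pi_pmf_of_set_coords:
  assumes "finite A" "K \<subseteq> A" "finite G" "G \<noteq> {}"
  shows "measure_pmf.prob (Pi_pmf A d (\<lambda>_. pmf_of_set G)) {r. \<forall>k\<in>K. r k = v k}
         = (\<Prod>k\<in>K. indicator G (v k) / real (card G))"
proof -
  have coords: "{r. \<forall>k\<in>K. r k = v k} = Pi A (\<lambda>x. if x \<in> K then {v x} else UNIV)"
    using assms(2) by (auto simp: Pi_def)
  have "measure_pmf.prob (Pi_pmf A d (\<lambda>_. pmf_of_set G)) {r. \<forall>k\<in>K. r k = v k}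
     = (\<Prod>x\<in>A. measure_pmf.prob (pmf_of_set G) (if x \<in> K then {v x} else UNIV))"
    unfolding coords by (rule measure_Pi_pmf_Pi[OF assms(1)])
  also have "\<dots> = (\<Prod>x\<in>A. if x \<in> K then indicator G (v x) / real (card G) else 1)"
    by (intro prod.cong refl) (auto simp: measure_pmf_single assms)
  also have "\<dots> = (\<Prod>k\<in>K. indicator G (v k) / real (card G))"
    using assms(1,2) by (subst prod.If_cases) (auto simp: Int_absorb1 intro!: prod.cong)
  finally show ?thesis .
qed

lemma map_pmf_random_edges_pair:
  assumes "finite G" "G \<noteq> {}" "i \<noteq> j" "i < t" "j < t"
  shows "map_pmf (\<lambda>r. (r i, r j)) (random_edges G t) = pmf_of_set (G \<times> G)"
proof (rule pmf_eqI)
  fix z :: "'a set \<times> 'a set"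
  obtain a b where z: "z = (a, b)" by force
  have preimage: "(\<lambda>r. (r i, r j)) -` {z} = {r. \<forall>k\<in>{i, j}. r k = (if k = i then a else b)}"
    using assms(3) by (auto simp: z)
  show "pmf (map_pmf (\<lambda>r. (r i, r j)) (random_edges G t)) z = pmf (pmf_of_set (G \<times> G)) z"
    unfolding pmf_map preimage random_edges_def using assms
    by (subst measure_Pi_pmf_of_set_coords) (auto simp: z card_cartesian_product indicator_def)
qed

lemma map_pmf_random_edges_triple:
  assumes "finite G" "G \<noteq> {}" "i \<noteq> j" "i \<noteq> k" "j \<noteq> k" "i < t" "j < t" "k < t"
  shows "map_pmf (\<lambda>r. (r i, r j, r k)) (random_edges G t) = pmf_of_set (G \<times> G \<times> G)"
proof (rule pmf_eqI)
  fix z :: "'a set \<times> 'a set \<times> 'a set"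
  obtain a b c where z: "z = (a, b, c)" by (cases z) force
  have preimage: "(\<lambda>r. (r i, r j, r k)) -` {z}
      = {r. \<forall>x\<in>{i, j, k}. r x = (if x = i then a else if x = j then b else c)}"
    using assms(3-5) by (auto simp: z)
  show "pmf (map_pmf (\<lambda>r. (r i, r j, r k)) (random_edges G t)) z
      = pmf (pmf_of_set (G \<times> G \<times> G)) z"
    unfolding pmf_map preimage random_edges_def using assms
    by (subst measure_Pi_pmf_of_set_coords) (auto simp: z card_cartesian_product indicator_def)
qed

lemma map_pmf_random_edges_two_pairs:
  assumes "finite G" "G \<noteq> {}" "i \<noteq> j" "i \<noteq> k" "j \<noteq> k" "i \<noteq> l" "j \<noteq> l" "k \<noteq> l"
    "i < t" "j < t" "k < t" "l < t"
  shows "map_pmf (\<lambda>r. ((r i, r j), (r k, r l))) (random_edges G t)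
       = pmf_of_set ((G \<times> G) \<times> (G \<times> G))"
proof (rule pmf_eqI)
  fix z :: "('a set \<times> 'a set) \<times> ('a set \<times> 'a set)"
  obtain a b c d where z: "z = ((a, b), (c, d))" by (cases z) force
  have preimage: "(\<lambda>r. ((r i, r j), (r k, r l))) -` {z}
      = {r. \<forall>x\<in>{i, j, k, l}. r x = (if x = i then a else if x = j then b else if x = k then c else d)}"
    using assms(3-8) by (auto simp: z)
  show "pmf (map_pmf (\<lambda>r. ((r i, r j), (r k, r l))) (random_edges G t)) z
      = pmf (pmf_of_set ((G \<times> G) \<times> (G \<times> G))) z"
    unfolding pmf_map preimage random_edges_def using assms
    by (subst measure_Pi_pmf_of_set_coords) (auto simp: z card_cartesian_product indicator_def)
qed

lemma finite_set_pmf_random_edges: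
  assumes "finite G" "G \<noteq> {}"
  shows "finite (set_pmf (random_edges G t))"
  unfolding random_edges_def using assms
  by (subst set_Pi_pmf) auto

lemma integral_pmf_of_set_Times_mult:
  fixes f :: "'a \<Rightarrow> real" and g :: "'b \<Rightarrow> real"
  assumes "finite A" "A \<noteq> {}" "finite B" "B \<noteq> {}"
  shows "measure_pmf.expectation (pmf_of_set (A \<times> B)) (\<lambda>(u, v). f u * g v)
       = measure_pmf.expectation (pmf_of_set A) f * measure_pmf.expectation (pmf_of_set B) g"
  using assms
  by (simp add: integral_pmf_of_set sum.cartesian_product sum_product card_cartesian_product)

lemma measure_pmf_prob_abs_dev_le:
  fixes f :: "'b \<Rightarrow> real"
  assumes "integrable (measure_pmf M) (\<lambda>x. f x ^ 2)" "0 < \<delta>"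
    and "measure_pmf.variance M f \<le> \<gamma> * \<delta> ^ 2"
  shows "1 - \<gamma> \<le> measure_pmf.prob M {x. \<bar>f x - measure_pmf.expectation M f\<bar> \<le> \<delta>}"
proof -
  let ?dev = "{x. \<delta> \<le> \<bar>f x - measure_pmf.expectation M f\<bar>}"
  have "measure_pmf.prob M ?dev \<le> measure_pmf.variance M f / \<delta> ^ 2"
    using measure_pmf.Chebyshev_inequality[OF _ assms(1,2)] by simp
  also have "\<dots> \<le> \<gamma>"
    using assms(2,3) by (simp add: divide_le_eq)
  finally have "1 - \<gamma> \<le> measure_pmf.prob M (UNIV - ?dev)"
    using measure_pmf.prob_compl[of ?dev M] by simp
  also have "\<dots> \<le> measure_pmf.prob M {x. \<bar>f x - measure_pmf.expectation M f\<bar> \<le> \<delta>}"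
    by (intro measure_pmf.finite_measure_mono) auto
  finally show ?thesis .
qed

lemma real_choose_two: "real (n choose 2) = real n * (real n - 1) / 2"
proof (induction n)
  case (Suc n)
  have "Suc n choose 2 = n + (n choose 2)" by (simp add: numeral_2_eq_2)
  then show ?case using Suc by (simp add: field_simps)
qed simp

lemma le_two_sqrt_if_choose_two_le:
  assumes "real (k choose 2) \<le> W" "1 \<le> W"
  shows "real k \<le> 2 * sqrt W"
proof (cases "k \<le> 1")
  case True
  then have "real k \<le> 1" by simp
  also have "1 \<le> sqrt W" using assms(2) by simp
  finally show ?thesis by simp
next
  case False
  then have "real k * real k \<le> real k * (2 * (real k - 1))"
    by (intro mult_left_mono) auto
  also have "\<dots> = 4 * real (k choose 2)" by (simp add: real_choose_two)
  also have "\<dots> \<le> 4 * W" using assms(1) by simp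
  finally have "(real k) ^ 2 \<le> 4 * W" by (simp add: power2_eq_square)
  then have "real k \<le> sqrt (4 * W)" by (simp add: real_le_rsqrt)
  then show ?thesis by (simp add: real_sqrt_mult)
qed

lemma card_less_pairs: "card {(i, j). i < j \<and> j < (t::nat)} = t choose 2"
proof (induction t)
  case (Suc t)
  have "{(i, j). i < j \<and> j < Suc t} = {(i, j). i < j \<and> j < t} \<union> (\<lambda>i. (i, t)) ` {..<t}"
    by auto
  moreover have "finite {(i, j). i < j \<and> j < (t::nat)}"
    by (rule finite_subset[of _ "{..<t} \<times> {..<t}"]) auto
  ultimately have "card {(i, j). i < j \<and> j < Suc t}
      = card {(i, j). i < j \<and> j < t} + card ((\<lambda>i. (i, t)) ` {..<t})"
    by (auto intro!: card_Un_disjoint)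
  also have "card ((\<lambda>i. (i, t)) ` {..<t}) = t" by (subst card_image) (auto simp: inj_on_def)
  finally show ?case using Suc by (simp add: numeral_2_eq_2)
qed simp

lemma real_card_filter_eq_sum:
  "finite A \<Longrightarrow> real (card {x\<in>A. P x}) = (\<Sum>x\<in>A. if P x then 1 else 0)"
  by (simp add: sum.inter_filter[symmetric])

text \<open>The variance bound \<open>N (p + 4 t p 4s/m)\<close> with \<open>p = 2\<tau>/m\<^sup>2\<close> is at most \<open>\<gamma> \<delta>\<^sup>2\<close> for the
  deviation \<open>\<delta> = (\<gamma> s\<^sup>2/\<tau>) N p\<close>, where \<open>s = \<surd>W\<close>, \<open>m = |G|\<close>, \<open>\<tau> = |T|\<close> and \<open>N = C(t, 2)\<close>.\<close>

lemma sample_size_arith: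
  fixes \<gamma> s m t N \<tau> :: real
  assumes "0 < \<gamma>" "\<gamma> < 1" "1 \<le> s" "0 < m" "0 < \<tau>" "\<tau> \<le> s ^ 2" "t ^ 2 / 4 \<le> N" "0 < t"
    and "100 * m / (\<gamma> ^ 3 * s) \<le> t"
  shows "N * (2 * \<tau> / m ^ 2 + 4 * t * (2 * \<tau> / m ^ 2 * (4 * s) / m))
         \<le> \<gamma> * ((\<gamma> * s ^ 2 / \<tau>) * (N * (2 * \<tau> / m ^ 2))) ^ 2"
proof -
  define v where "v = s * t / m"
  define p where "p = 2 * \<tau> / m ^ 2"
  define K where "K = \<gamma> ^ 3 * s ^ 4 * N * 2 / (\<tau> * m ^ 2)"
  have \<gamma>3: "0 < \<gamma> ^ 3" "\<gamma> ^ 3 \<le> 1" using assms(1,2) by (simp_all add: power_le_one)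
  have "100 * m \<le> t * (\<gamma> ^ 3 * s)"
    using assms(3,9) \<gamma>3 by (simp add: divide_le_eq)
  then have \<gamma>v: "100 \<le> \<gamma> ^ 3 * v"
    unfolding v_def using assms(4) by (simp add: le_divide_eq algebra_simps)
  have v0: "0 < v" unfolding v_def using assms(3,4,8) by simp
  have "\<gamma> ^ 3 * v \<le> v" using \<gamma>3 v0 by (simp add: mult_le_cancel_right1)
  then have v100: "100 \<le> v" using \<gamma>v by simp
  have N0: "0 \<le> N" using assms(7) by (smt (verit) zero_le_power2 divide_nonneg_pos)
  have p0: "0 \<le> p" unfolding p_def using assms(5) by simp
  have lhs: "N * (2 * \<tau> / m ^ 2 + 4 * t * (2 * \<tau> / m ^ 2 * (4 * s) / m)) = N * p * (1 + 16 * v)"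
    unfolding p_def v_def using assms(4) by (simp add: field_simps)
  have rhs: "\<gamma> * ((\<gamma> * s ^ 2 / \<tau>) * (N * (2 * \<tau> / m ^ 2))) ^ 2 = N * p * K"
    unfolding p_def K_def using assms(4,5) by (simp add: field_simps power2_eq_square eval_nat_numeral)
  have s4: "s ^ 2 \<le> s ^ 4 / \<tau>"
  proof -
    have "s ^ 2 * \<tau> \<le> s ^ 2 * s ^ 2" using assms(6) by (intro mult_left_mono) auto
    then show ?thesis using assms(5) by (simp add: le_divide_eq eval_nat_numeral algebra_simps)
  qed
  have "\<gamma> ^ 3 * v ^ 2 / 2 = \<gamma> ^ 3 * s ^ 2 * (t ^ 2 / 4) * 2 / m ^ 2"
    unfolding v_def using assms(4) by (simp add: field_simps power2_eq_square)
  also have "\<dots> \<le> \<gamma> ^ 3 * (s ^ 4 / \<tau>) * N * 2 / m ^ 2"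
    using \<gamma>3 s4 assms(4,5,7) by (intro divide_right_mono mult_right_mono mult_mono mult_left_mono) auto
  also have "\<dots> = K" unfolding K_def by (simp add: field_simps)
  finally have K: "\<gamma> ^ 3 * v ^ 2 / 2 \<le> K" .
  have "100 * v \<le> (\<gamma> ^ 3 * v) * v" using \<gamma>v v0 by (intro mult_right_mono) auto
  then have "50 * v \<le> \<gamma> ^ 3 * v ^ 2 / 2" by (simp add: power2_eq_square algebra_simps)
  then have "1 + 16 * v \<le> \<gamma> ^ 3 * v ^ 2 / 2" using v100 by simp
  then have "N * p * (1 + 16 * v) \<le> N * p * K"
    using K N0 p0 by (intro mult_left_mono) auto
  then show ?thesis unfolding lhs rhs .
qed

section \<open>Wedges\<close>

lemma wedgesE:
  assumes "w \<in> wedges G"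
  obtains e f where "w = {e, f}" "e \<in> G" "f \<in> G" "e \<noteq> f" "card (e \<inter> f) = 1"
  using assms unfolding wedges_def by blast

lemma wedgesI: "e \<in> G \<Longrightarrow> f \<in> G \<Longrightarrow> e \<noteq> f \<Longrightarrow> card (e \<inter> f) = 1 \<Longrightarrow> {e, f} \<in> wedges G"
  unfolding wedges_def by blast

lemma wedgesD:
  assumes "{x, y} \<in> wedges G"
  shows "x \<in> G" "y \<in> G" "x \<noteq> y" "card (x \<inter> y) = 1"
proof -
  obtain e f where ef: "{x, y} = {e, f}" "e \<in> G" "f \<in> G" "e \<noteq> f" "card (e \<inter> f) = 1"
    using assms by (rule wedgesE)
  then have "(x = e \<and> y = f) \<or> (x = f \<and> y = e)" by (simp add: doubleton_eq_iff)
  then show "x \<in> G" "y \<in> G" "x \<noteq> y" "card (x \<inter> y) = 1"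
    using ef by (elim disjE; simp add: Int_commute)+
qed

lemma wedges_subset_Pow: "wedges G \<subseteq> Pow G"
  by (auto elim: wedgesE)

lemma finite_wedges: "finite G \<Longrightarrow> finite (wedges G)"
  by (rule finite_subset[OF wedges_subset_Pow]) simp

lemma nonempty_if_wedge: "T \<subseteq> wedges G \<Longrightarrow> T \<noteq> {} \<Longrightarrow> G \<noteq> {}"
  by (auto elim: wedgesE)

lemma card_ordered_wedge_pairs:
  assumes "finite T" "T \<subseteq> wedges G"
  shows "card {(a, b). {a, b} \<in> T} = 2 * card T"
proof -
  have two_orders: "card {(a, b). {a, b} = w} = 2" if "w \<in> T" for w
  proof -
    have "w \<in> wedges G" using that assms(2) by blast
    then obtain e f where w: "w = {e, f}" "e \<noteq> f" by (rule wedgesE)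
    then have "{(a, b). {a, b} = w} = {(e, f), (f, e)}" by (auto simp: doubleton_eq_iff)
    then show ?thesis using w by simp
  qed
  have finite_orders: "finite {(a, b). {a, b} = w}" if "w \<in> T" for w
    using two_orders[OF that] by (intro card_ge_0_finite) simp
  have "{(a, b). {a, b} \<in> T} = (\<Union>w\<in>T. {(a, b). {a, b} = w})" by blast
  also have "card \<dots> = (\<Sum>w\<in>T. card {(a, b). {a, b} = w})"
    using assms(1) finite_orders by (intro card_UN_disjoint) auto
  also have "\<dots> = 2 * card T" using two_orders by simp
  finally show ?thesis .
qed

lemma pairs_of_star_subset_wedges:
  assumes "simple_graph G"
  shows "{Z. Z \<subseteq> {y\<in>G. u \<in> y} \<and> card Z = 2} \<subseteq> wedges G"
proof
  fix Z assume "Z \<in> {Z. Z \<subseteq> {y\<in>G. u \<in> y} \<and> card Z = 2}"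
  then obtain y1 y2 where Z: "Z = {y1, y2}" "y1 \<noteq> y2" "y1 \<in> G" "y2 \<in> G" "u \<in> y1 \<inter> y2"
    by (auto simp: card_2_iff)
  have card_edges: "card y1 = 2" "card y2 = 2"
    using Z assms unfolding simple_graph_def by auto
  then have fin: "finite y1" "finite y2" by (auto intro: card_ge_0_finite)
  have "card (y1 \<inter> y2) \<le> 2" using card_edges card_mono[OF fin(1), of "y1 \<inter> y2"] by auto
  moreover have "card (y1 \<inter> y2) \<noteq> 2"
  proof
    assume "card (y1 \<inter> y2) = 2"
    then have "y1 \<inter> y2 = y1" "y1 \<inter> y2 = y2"
      using card_subset_eq[OF fin(1), of "y1 \<inter> y2"] card_subset_eq[OF fin(2), of "y1 \<inter> y2"]
        card_edges by auto
    then show False using Z by auto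
  qed
  moreover have "card (y1 \<inter> y2) \<noteq> 0" using Z fin by auto
  ultimately have "card (y1 \<inter> y2) = 1" by linarith
  then show "Z \<in> wedges G" using Z by (simp add: wedgesI)
qed

lemma card_star_le:
  assumes "simple_graph G" "card (wedges G) \<ge> 1"
  shows "real (card {y\<in>G. u \<in> y}) \<le> 2 * sqrt (real (card (wedges G)))"
proof (rule le_two_sqrt_if_choose_two_le)
  have finG: "finite G" using assms(1) unfolding simple_graph_def by auto
  have "card {y\<in>G. u \<in> y} choose 2 = card {Z. Z \<subseteq> {y\<in>G. u \<in> y} \<and> card Z = 2}"
    using finG by (simp add: n_subsets)
  also have "\<dots> \<le> card (wedges G)"
    using finite_wedges[OF finG] pairs_of_star_subset_wedges[OF assms(1)] by (rule card_mono)
  finally show "real (card {y\<in>G. u \<in> y} choose 2) \<le> real (card (wedges G))" by simp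
qed (use assms(2) in simp)

text \<open>An edge \<open>{u, v}\<close> forms wedges only with edges of the stars at \<open>u\<close> and at \<open>v\<close>.\<close>

lemma card_wedge_partners_le:
  assumes "simple_graph G" "card (wedges G) \<ge> 1" "x \<in> G" "T \<subseteq> wedges G"
  shows "real (card {y\<in>G. {x, y} \<in> T}) \<le> 4 * sqrt (real (card (wedges G)))"
proof -
  have finG: "finite G" using assms(1) unfolding simple_graph_def by auto
  obtain u v where x: "x = {u, v}"
    using assms(1,3) unfolding simple_graph_def by (auto simp: card_2_iff)
  have "{y\<in>G. {x, y} \<in> T} \<subseteq> {y\<in>G. u \<in> y} \<union> {y\<in>G. v \<in> y}"
  proof
    fix y assume y: "y \<in> {y\<in>G. {x, y} \<in> T}"
    then have "card (x \<inter> y) = 1" using assms(4) by (blast intro: wedgesD(4))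
    then obtain w where "w \<in> x \<inter> y" by (metis card_1_singletonE insertI1)
    then show "y \<in> {y\<in>G. u \<in> y} \<union> {y\<in>G. v \<in> y}"
      using x y by auto
  qed
  then have "card {y\<in>G. {x, y} \<in> T} \<le> card ({y\<in>G. u \<in> y} \<union> {y\<in>G. v \<in> y})"
    using finG by (intro card_mono) auto
  also have "\<dots> \<le> card {y\<in>G. u \<in> y} + card {y\<in>G. v \<in> y}" by (rule card_Un_le)
  finally show ?thesis
    using card_star_le[OF assms(1,2), of u] card_star_le[OF assms(1,2), of v] by linarith
qed

section \<open>Moments of the wedge count\<close>

locale wedge_sample =
  fixes G :: "'a set set" and T :: "'a set set set" and t :: nat
  assumes simple: "simple_graph G" and T_wedges: "T \<subseteq> wedges G" and G_nonempty: "G \<noteq> {}"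
begin

abbreviation sample :: "(nat \<Rightarrow> 'a set) pmf" where
  "sample \<equiv> random_edges G t"

definition hit :: "'a set \<Rightarrow> 'a set \<Rightarrow> real" where
  "hit a b = (if {a, b} \<in> T then 1 else 0)"

definition hit_prob :: real where
  "hit_prob = 2 * real (card T) / real (card G) ^ 2"

definition index_pairs :: "(nat \<times> nat) set" where
  "index_pairs = {(i, j). i < j \<and> j < t}"

definition pair_hit :: "nat \<times> nat \<Rightarrow> (nat \<Rightarrow> 'a set) \<Rightarrow> real" where
  "pair_hit q r = hit (r (fst q)) (r (snd q))"

definition wedge_degree :: "'a set \<Rightarrow> real" where
  "wedge_degree x = (\<Sum>y\<in>G. hit x y)"

definition overlapping :: "nat \<times> nat \<Rightarrow> (nat \<times> nat) set" where
  "overlapping q = {q'\<in>index_pairs. fst q' \<in> {fst q, snd q} \<or> snd q' \<in> {fst q, snd q}}"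

lemma finite_G: "finite G"
  using simple unfolding simple_graph_def by auto

lemma finite_T: "finite T"
  using finite_subset[OF T_wedges finite_wedges[OF finite_G]] .

lemma card_G_pos: "0 < card G"
  using finite_G G_nonempty by (simp add: card_gt_0_iff)

lemma finite_index_pairs: "finite index_pairs"
  unfolding index_pairs_def by (rule finite_subset[of _ "{..<t} \<times> {..<t}"]) auto

lemma card_index_pairs: "card index_pairs = t choose 2"
  unfolding index_pairs_def by (rule card_less_pairs)

lemma integrable_sample: "integrable (measure_pmf sample) (f :: _ \<Rightarrow> real)"
  using finite_set_pmf_random_edges[OF finite_G G_nonempty] by (rule integrable_measure_pmf_finite)

lemma hit_commute: "hit a b = hit b a"
  unfolding hit_def by (simp add: insert_commute)

lemma hit_nonneg: "0 \<le> hit a b"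
  unfolding hit_def by simp

lemma hit_prob_nonneg: "0 \<le> hit_prob"
  unfolding hit_prob_def by simp

lemma sum_hit: "(\<Sum>(a, b)\<in>G \<times> G. hit a b) = 2 * real (card T)"
proof -
  have "{z\<in>G \<times> G. case z of (a, b) \<Rightarrow> {a, b} \<in> T} = {(a, b). {a, b} \<in> T}"
    using T_wedges wedgesD by blast
  then have "(\<Sum>(a, b)\<in>G \<times> G. hit a b) = real (card {(a, b). {a, b} \<in> T})"
    using real_card_filter_eq_sum[of "G \<times> G" "\<lambda>(a, b). {a, b} \<in> T"] finite_G
    by (simp add: hit_def case_prod_beta)
  then show ?thesis
    by (simp add: card_ordered_wedge_pairs[OF finite_T T_wedges])
qed

lemma expectation_uniform_hit:
  "measure_pmf.expectation (pmf_of_set (G \<times> G)) (\<lambda>(a, b). hit a b) = hit_prob"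
  using finite_G G_nonempty sum_hit
  by (simp add: integral_pmf_of_set card_cartesian_product hit_prob_def power2_eq_square)

lemma pair_count_eq_sum: "real (pair_count T t r) = (\<Sum>q\<in>index_pairs. pair_hit q r)"
proof -
  have "pair_count T t r = card {q\<in>index_pairs. {r (fst q), r (snd q)} \<in> T}"
    unfolding pair_count_def index_pairs_def by (intro arg_cong[where f = card]) auto
  then show ?thesis
    by (simp add: real_card_filter_eq_sum[OF finite_index_pairs] pair_hit_def hit_def)
qed

lemma expectation_hit:
  assumes "i \<noteq> j" "i < t" "j < t"
  shows "measure_pmf.expectation sample (\<lambda>r. hit (r i) (r j)) = hit_prob"
proof -
  have "measure_pmf.expectation sample (\<lambda>r. hit (r i) (r j))
      = measure_pmf.expectation (map_pmf (\<lambda>r. (r i, r j)) sample) (\<lambda>(a, b). hit a b)"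
    by simp
  also have "\<dots> = hit_prob"
    using assms finite_G G_nonempty
    by (simp add: map_pmf_random_edges_pair expectation_uniform_hit)
  finally show ?thesis .
qed

lemma expectation_pair_hit:
  "q \<in> index_pairs \<Longrightarrow> measure_pmf.expectation sample (pair_hit q) = hit_prob"
  unfolding pair_hit_def index_pairs_def by (rule expectation_hit) auto

lemma expectation_pair_count:
  "measure_pmf.expectation sample (\<lambda>r. real (pair_count T t r)) = real (t choose 2) * hit_prob"
proof -
  have "measure_pmf.expectation sample (\<lambda>r. real (pair_count T t r))
      = (\<Sum>q\<in>index_pairs. measure_pmf.expectation sample (pair_hit q))"
    unfolding pair_count_eq_sum by (rule Bochner_Integration.integral_sum) (rule integrable_sample)
  also have "\<dots> = real (t choose 2) * hit_prob"
    by (simp add: expectation_pair_hit card_index_pairs)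
  finally show ?thesis .
qed

lemma expectation_hit_disjoint:
  assumes "i \<noteq> j" "i \<noteq> k" "j \<noteq> k" "i \<noteq> l" "j \<noteq> l" "k \<noteq> l" "i < t" "j < t" "k < t" "l < t"
  shows "measure_pmf.expectation sample (\<lambda>r. hit (r i) (r j) * hit (r k) (r l)) = hit_prob ^ 2"
proof -
  let ?h = "\<lambda>(a, b). hit a b"
  have "measure_pmf.expectation sample (\<lambda>r. hit (r i) (r j) * hit (r k) (r l))
      = measure_pmf.expectation (map_pmf (\<lambda>r. ((r i, r j), (r k, r l))) sample)
           (\<lambda>(u, v). ?h u * ?h v)"
    by simp
  also have "\<dots> = measure_pmf.expectation (pmf_of_set ((G \<times> G) \<times> (G \<times> G))) (\<lambda>(u, v). ?h u * ?h v)"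
    using assms finite_G G_nonempty by (subst map_pmf_random_edges_two_pairs) auto
  also have "\<dots> = hit_prob ^ 2"
    using finite_G G_nonempty
    by (simp add: integral_pmf_of_set_Times_mult expectation_uniform_hit power2_eq_square)
  finally show ?thesis .
qed

lemma sum_wedge_degree: "(\<Sum>x\<in>G. wedge_degree x) = 2 * real (card T)"
  unfolding wedge_degree_def using sum_hit by (simp add: sum.cartesian_product)

lemma wedge_degree_le:
  assumes "x \<in> G" "card (wedges G) \<ge> 1"
  shows "wedge_degree x \<le> 4 * sqrt (real (card (wedges G)))"
proof -
  have "wedge_degree x = real (card {y\<in>G. {x, y} \<in> T})"
    unfolding wedge_degree_def hit_def by (simp add: real_card_filter_eq_sum[OF finite_G])
  then show ?thesis using card_wedge_partners_le[OF simple assms(2,1) T_wedges] by simp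
qed

lemma sum_hit_shared: "(\<Sum>(x, y, z)\<in>G \<times> G \<times> G. hit x y * hit x z) = (\<Sum>x\<in>G. (wedge_degree x) ^ 2)"
proof -
  have "(\<Sum>(x, y, z)\<in>G \<times> G \<times> G. hit x y * hit x z) = (\<Sum>x\<in>G. \<Sum>y\<in>G. \<Sum>z\<in>G. hit x y * hit x z)"
    by (simp add: sum.cartesian_product case_prod_beta)
  also have "\<dots> = (\<Sum>x\<in>G. (wedge_degree x) ^ 2)"
    unfolding wedge_degree_def by (simp add: sum_product power2_eq_square)
  finally show ?thesis .
qed

lemma sum_wedge_degree_sq_le:
  assumes "card (wedges G) \<ge> 1"
  shows "(\<Sum>x\<in>G. (wedge_degree x) ^ 2) \<le> 4 * sqrt (real (card (wedges G))) * (2 * real (card T))"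
proof -
  have "(\<Sum>x\<in>G. (wedge_degree x) ^ 2) \<le> (\<Sum>x\<in>G. 4 * sqrt (real (card (wedges G))) * wedge_degree x)"
  proof (rule sum_mono)
    fix x assume "x \<in> G"
    have "0 \<le> wedge_degree x" unfolding wedge_degree_def by (intro sum_nonneg hit_nonneg)
    then show "(wedge_degree x) ^ 2 \<le> 4 * sqrt (real (card (wedges G))) * wedge_degree x"
      unfolding power2_eq_square
      using wedge_degree_le[OF \<open>x \<in> G\<close> assms] by (intro mult_right_mono) auto
  qed
  also have "\<dots> = 4 * sqrt (real (card (wedges G))) * (2 * real (card T))"
    by (simp add: sum_distrib_left[symmetric] sum_wedge_degree)
  finally show ?thesis .
qed

lemma expectation_hit_shared:
  assumes "a \<noteq> b" "a \<noteq> c" "b \<noteq> c" "a < t" "b < t" "c < t" "card (wedges G) \<ge> 1"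
  shows "measure_pmf.expectation sample (\<lambda>r. hit (r a) (r b) * hit (r a) (r c))
         \<le> hit_prob * (4 * sqrt (real (card (wedges G)))) / real (card G)"
proof -
  have "measure_pmf.expectation sample (\<lambda>r. hit (r a) (r b) * hit (r a) (r c))
      = measure_pmf.expectation (map_pmf (\<lambda>r. (r a, r b, r c)) sample) (\<lambda>(x, y, z). hit x y * hit x z)"
    by simp
  also have "\<dots> = (\<Sum>x\<in>G. (wedge_degree x) ^ 2) / real (card G) ^ 3"
    using assms finite_G G_nonempty
    by (simp add: map_pmf_random_edges_triple integral_pmf_of_set sum_hit_shared
        card_cartesian_product power3_eq_cube)
  also have "\<dots> \<le> 4 * sqrt (real (card (wedges G))) * (2 * real (card T)) / real (card G) ^ 3"
    by (intro divide_right_mono sum_wedge_degree_sq_le assms(7)) simp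
  also have "\<dots> = hit_prob * (4 * sqrt (real (card (wedges G)))) / real (card G)"
    unfolding hit_prob_def using card_G_pos by (simp add: power2_eq_square power3_eq_cube field_simps)
  finally show ?thesis .
qed

lemma card_overlapping_le: "card (overlapping q) \<le> 4 * t"
proof -
  let ?ends = "{fst q, snd q}"
  have "overlapping q \<subseteq> (?ends \<times> {..<t}) \<union> ({..<t} \<times> ?ends)"
    unfolding overlapping_def index_pairs_def by auto
  then have "card (overlapping q) \<le> card ((?ends \<times> {..<t}) \<union> ({..<t} \<times> ?ends))"
    by (intro card_mono) auto
  also have "\<dots> \<le> card ?ends * t + t * card ?ends"
    using card_Un_le[of "?ends \<times> {..<t}" "{..<t} \<times> ?ends"] by (simp add: card_cartesian_product)
  also have "\<dots> \<le> 2 * t + t * 2"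
    using card_insert_le_m1[of 2 "{snd q}" "fst q"] by (intro add_mono mult_le_mono) auto
  finally show ?thesis by simp
qed

lemma shared_index_if_overlapping:
  assumes "q \<in> index_pairs" "q' \<in> overlapping q" "q' \<noteq> q"
  obtains a b c where "a \<noteq> b" "a \<noteq> c" "b \<noteq> c" "a < t" "b < t" "c < t"
    "\<And>r. pair_hit q r * pair_hit q' r = hit (r a) (r b) * hit (r a) (r c)"
proof -
  obtain i j where ij: "q = (i, j)" "i < j" "j < t" using assms(1) unfolding index_pairs_def by auto
  obtain k l where kl: "q' = (k, l)" "k < l" "l < t"
    using assms(2) unfolding overlapping_def index_pairs_def by auto
  have "k = i \<or> k = j \<or> l = i \<or> l = j" "\<not> (k = i \<and> l = j)"
    using assms(2,3) ij kl unfolding overlapping_def by auto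
  then consider "k = i" "l \<noteq> j" | "k = j" | "l = i" | "l = j" "k \<noteq> i" by blast
  then show ?thesis
  proof cases
    case 1
    then show ?thesis using that[of i j l] ij kl by (simp add: pair_hit_def)
  next
    case 2
    then show ?thesis using that[of j i l] ij kl by (simp add: pair_hit_def hit_commute)
  next
    case 3
    then show ?thesis using that[of i j k] ij kl by (simp add: pair_hit_def hit_commute)
  next
    case 4
    then show ?thesis using that[of j i k] ij kl by (simp add: pair_hit_def hit_commute)
  qed
qed

lemma pair_hit_mult_self: "pair_hit q r * pair_hit q r = pair_hit q r"
  unfolding pair_hit_def hit_def by simp

lemma expectation_pair_hit_mult_le:
  assumes "q \<in> index_pairs" "q' \<in> index_pairs" "card (wedges G) \<ge> 1"
  shows "measure_pmf.expectation sample (\<lambda>r. pair_hit q r * pair_hit q' r)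
       \<le> hit_prob ^ 2 + (if q' = q then hit_prob else 0)
         + (if q' \<in> overlapping q then hit_prob * (4 * sqrt (real (card (wedges G)))) / real (card G) else 0)"
proof -
  have shared_nonneg: "0 \<le> hit_prob * (4 * sqrt (real (card (wedges G)))) / real (card G)"
    using hit_prob_nonneg by simp
  consider "q' = q" | "q' \<noteq> q" "q' \<in> overlapping q" | "q' \<notin> overlapping q" by blast
  then show ?thesis
  proof cases
    case 1
    have "measure_pmf.expectation sample (\<lambda>r. pair_hit q r * pair_hit q' r) = hit_prob"
      using expectation_pair_hit[OF assms(1)] 1 by (simp add: pair_hit_mult_self)
    then show ?thesis using 1 shared_nonneg by simp
  next
    case 2
    then obtain a b c where abc: "a \<noteq> b" "a \<noteq> c" "b \<noteq> c" "a < t" "b < t" "c < t"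
      and prod: "\<And>r. pair_hit q r * pair_hit q' r = hit (r a) (r b) * hit (r a) (r c)"
      using shared_index_if_overlapping[OF assms(1)] by metis
    show ?thesis
      using expectation_hit_shared[OF abc assms(3)] 2 unfolding prod by (simp add: add_increasing)
  next
    case 3
    obtain i j k l where "q = (i, j)" "q' = (k, l)" "i < j" "j < t" "k < l" "l < t"
      using assms(1,2) unfolding index_pairs_def by auto
    moreover have "k \<noteq> i" "k \<noteq> j" "l \<noteq> i" "l \<noteq> j"
      using 3 assms(2) calculation unfolding overlapping_def by auto
    ultimately have "measure_pmf.expectation sample (\<lambda>r. pair_hit q r * pair_hit q' r) = hit_prob ^ 2"
      unfolding pair_hit_def by (simp add: expectation_hit_disjoint)
    then show ?thesis using 3 hit_prob_nonneg by auto
  qed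
qed

lemma variance_pair_count_le:
  assumes "card (wedges G) \<ge> 1"
  shows "measure_pmf.variance sample (\<lambda>r. real (pair_count T t r))
       \<le> real (t choose 2) * (hit_prob + 4 * real t * (hit_prob * (4 * sqrt (real (card (wedges G)))) / real (card G)))"
proof -
  define shared where "shared = hit_prob * (4 * sqrt (real (card (wedges G)))) / real (card G)"
  let ?cov = "\<lambda>q q'. measure_pmf.expectation sample (\<lambda>r. (pair_hit q r - hit_prob) * (pair_hit q' r - hit_prob))"
  have centered: "real (pair_count T t r) - real (t choose 2) * hit_prob
      = (\<Sum>q\<in>index_pairs. pair_hit q r - hit_prob)" for r
    by (simp add: pair_count_eq_sum sum_subtractf card_index_pairs)
  have square: "(real (pair_count T t r) - real (t choose 2) * hit_prob) ^ 2
      = (\<Sum>q\<in>index_pairs. \<Sum>q'\<in>index_pairs. (pair_hit q r - hit_prob) * (pair_hit q' r - hit_prob))" for r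
    unfolding centered power2_eq_square by (rule sum_product)
  have cov: "?cov q q' \<le> (if q' = q then hit_prob else 0) + (if q' \<in> overlapping q then shared else 0)"
    if "q \<in> index_pairs" "q' \<in> index_pairs" for q q'
  proof -
    have "?cov q q' = measure_pmf.expectation sample (\<lambda>r. pair_hit q r * pair_hit q' r) - hit_prob ^ 2"
      using expectation_pair_hit[OF that(1)] expectation_pair_hit[OF that(2)]
      by (simp add: algebra_simps power2_eq_square integrable_sample)
    then show ?thesis
      using expectation_pair_hit_mult_le[OF that assms] unfolding shared_def by simp
  qed
  have row: "(\<Sum>q'\<in>index_pairs. (if q' = q then hit_prob else 0) + (if q' \<in> overlapping q then shared else 0))
      \<le> hit_prob + 4 * real t * shared" if "q \<in> index_pairs" for q
  proof -
    have "overlapping q \<subseteq> index_pairs" unfolding overlapping_def by auto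
    then have "(\<Sum>q'\<in>index_pairs. (if q' = q then hit_prob else 0) + (if q' \<in> overlapping q then shared else 0))
        = hit_prob + real (card (overlapping q)) * shared"
      using that finite_index_pairs by (simp add: sum.distrib sum.If_cases Int_absorb1)
    also have "\<dots> \<le> hit_prob + 4 * real t * shared"
      using card_overlapping_le[of q] hit_prob_nonneg unfolding shared_def
      by (intro add_left_mono mult_right_mono) auto
    finally show ?thesis .
  qed
  have "measure_pmf.variance sample (\<lambda>r. real (pair_count T t r))
      = measure_pmf.expectation sample
          (\<lambda>r. \<Sum>q\<in>index_pairs. \<Sum>q'\<in>index_pairs. (pair_hit q r - hit_prob) * (pair_hit q' r - hit_prob))"
    by (simp only: expectation_pair_count square)
  also have "\<dots> = (\<Sum>q\<in>index_pairs. \<Sum>q'\<in>index_pairs. ?cov q q')"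
    by (simp add: Bochner_Integration.integral_sum integrable_sample)
  also have "\<dots> \<le> (\<Sum>q\<in>index_pairs. \<Sum>q'\<in>index_pairs.
      (if q' = q then hit_prob else 0) + (if q' \<in> overlapping q then shared else 0))"
    by (intro sum_mono cov)
  also have "\<dots> \<le> (\<Sum>q\<in>index_pairs. hit_prob + 4 * real t * shared)"
    by (intro sum_mono row)
  also have "\<dots> = real (t choose 2) * (hit_prob + 4 * real t * shared)"
    by (simp add: card_index_pairs)
  finally show ?thesis unfolding shared_def .
qed

lemma pair_count_concentration:
  assumes "0 < \<gamma>" "\<gamma> < 1" "2 \<le> t" "T \<noteq> {}" "card G \<le> card (wedges G)"
    and "100 * real (card G) / (\<gamma> ^ 3 * sqrt (real (card (wedges G)))) \<le> real t"
  shows "1 - \<gamma> \<le> measure_pmf.prob sample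
           {r. \<bar>real (pair_count T t r)
                 - measure_pmf.expectation sample (\<lambda>r. real (pair_count T t r))\<bar>
              \<le> (\<gamma> * real (card (wedges G)) / real (card T))
                 * measure_pmf.expectation sample (\<lambda>r. real (pair_count T t r))}"
proof (rule measure_pmf_prob_abs_dev_le[OF integrable_sample])
  define W where "W = real (card (wedges G))"
  define N where "N = real (t choose 2)"
  have W1: "card (wedges G) \<ge> 1" using assms(5) card_G_pos by linarith
  have sqrt_W: "1 \<le> sqrt W" "sqrt W ^ 2 = W" unfolding W_def using W1 by simp_all
  have T_pos: "0 < real (card T)" using finite_T assms(4) by (simp add: card_gt_0_iff)
  have "card T \<le> card (wedges G)" using card_mono[OF finite_wedges[OF finite_G] T_wedges] .
  then have T_le: "real (card T) \<le> sqrt W ^ 2" unfolding sqrt_W W_def by simp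
  have "real t * real t \<le> real t * (2 * (real t - 1))" using assms(3) by (intro mult_left_mono) auto
  then have N: "real t ^ 2 / 4 \<le> N" unfolding N_def real_choose_two by (simp add: power2_eq_square algebra_simps)
  have "0 < N" using assms(3) by (simp add: N_def)
  then show "0 < (\<gamma> * real (card (wedges G)) / real (card T))
                 * measure_pmf.expectation sample (\<lambda>r. real (pair_count T t r))"
    using assms(1) W1 T_pos card_G_pos by (simp add: expectation_pair_count hit_prob_def N_def)
  have "measure_pmf.variance sample (\<lambda>r. real (pair_count T t r))
      \<le> N * (hit_prob + 4 * real t * (hit_prob * (4 * sqrt W) / real (card G)))"
    using variance_pair_count_le[OF W1] unfolding N_def W_def .
  also have "\<dots> \<le> \<gamma> * ((\<gamma> * sqrt W ^ 2 / real (card T)) * (N * hit_prob)) ^ 2"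
    unfolding hit_prob_def
    using sample_size_arith[OF assms(1,2) sqrt_W(1) _ T_pos T_le N] assms(3,6) card_G_pos
    by (simp add: W_def)
  finally show "measure_pmf.variance sample (\<lambda>r. real (pair_count T t r))
      \<le> \<gamma> * ((\<gamma> * real (card (wedges G)) / real (card T))
                 * measure_pmf.expectation sample (\<lambda>r. real (pair_count T t r))) ^ 2"
    unfolding sqrt_W by (simp add: expectation_pair_count N_def W_def)
qed

end

theorem mainTheorem2:
  fixes E :: "'a set set" and S :: "'a set set set" and s :: nat
  assumes "simple_graph E" and "S \<subseteq> wedges E" and "S \<noteq> {}" and "s \<ge> 2"
  shows "(measure_pmf.expectation (random_edges E s) (\<lambda>r. real (pair_count S s r))
           = real (s choose 2) * (2 * real (card S) / real (card E) ^ 2))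
    \<and> (\<exists>c'::real. \<forall>\<gamma>::real. \<forall>(G::nat set set) (T::nat set set set) (t::nat).
           0 < \<gamma> \<and> \<gamma> < 1 \<and> simple_graph G \<and> T \<subseteq> wedges G \<and> T \<noteq> {} \<and> t \<ge> 2 \<and>
           card (wedges G) \<ge> card G \<and>
           real t \<ge> c' * real (card G) / (\<gamma> ^ 3 * sqrt (real (card (wedges G))))
           \<longrightarrow> measure_pmf.prob (random_edges G t)
                 {r. \<bar>real (pair_count T t r)
                        - measure_pmf.expectation (random_edges G t) (\<lambda>r. real (pair_count T t r))\<bar>
                     \<le> (\<gamma> * real (card (wedges G)) / real (card T))
                        * measure_pmf.expectation (random_edges G t) (\<lambda>r. real (pair_count T t r))}
               \<ge> 1 - \<gamma>)"
proof (intro conjI exI[of _ 100] allI impI, goal_cases)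
  case 1
  interpret wedge_sample E S s
    using assms(1,2) nonempty_if_wedge[OF assms(2,3)] by unfold_locales
  show ?case using expectation_pair_count by (simp add: hit_prob_def)
next
  case (2 \<gamma> G T t)
  then have "simple_graph G" "T \<subseteq> wedges G" "G \<noteq> {}"
    using nonempty_if_wedge by blast+
  then interpret wedge_sample G T t by unfold_locales
  show ?case using pair_count_concentration 2 by auto
qed

end
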